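(* Let $G$ and $H$ be finite simple graphs without isolated vertices, of orders $n$ and $m$ respectively (with $n,m\ge 2$). Then \[ \gamma_{2t}(G\Box H)\ge\tfrac{3}{2}\min\{n,m\}. \]
   Context: For a graph $G=(V,E)$, a set $S\subseteq V$ is a total $2$-dominating set if every vertex of $V$ (including those in $S$) is adjacent to at least $2$ vertices of $S$; $\gamma_{2t}(G)$ is the minimum cardinality of such a set. $G\Box H$ denotes the Cartesian product: vertex set $V(G)\times V(H)$, with $(u_1,v_1)\sim(u_2,v_2)$ iff either $u_1=u_2$ and $v_1\sim v_2$, or $v_1=v_2$ and $u_1\sim u_2$. *)

theory Defs
  imports Complex_Main
begin

definition simple_graph :: "'a set \<Rightarrow> ('a \<Rightarrow> 'a \<Rightarrow> bool) \<Rightarrow> bool" where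
  "simple_graph V E \<longleftrightarrow> finite V \<and> (\<forall>u v. E u v \<longrightarrow> u \<in> V \<and> v \<in> V)
     \<and> (\<forall>u v. E u v \<longrightarrow> E v u) \<and> (\<forall>v. \<not> E v v)"

definition no_isolated :: "'a set \<Rightarrow> ('a \<Rightarrow> 'a \<Rightarrow> bool) \<Rightarrow> bool" where
  "no_isolated V E \<longleftrightarrow> (\<forall>v\<in>V. \<exists>u. E v u)"

definition cart_edges :: "('a \<Rightarrow> 'a \<Rightarrow> bool) \<Rightarrow> ('b \<Rightarrow> 'b \<Rightarrow> bool)
    \<Rightarrow> ('a \<times> 'b) \<Rightarrow> ('a \<times> 'b) \<Rightarrow> bool" where
  "cart_edges E F = (\<lambda>(u1, v1) (u2, v2). (u1 = u2 \<and> F v1 v2) \<or> (v1 = v2 \<and> E u1 u2))"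

definition total_2_dominating :: "'a set \<Rightarrow> ('a \<Rightarrow> 'a \<Rightarrow> bool) \<Rightarrow> 'a set \<Rightarrow> bool" where
  "total_2_dominating V E S \<longleftrightarrow> S \<subseteq> V \<and> (\<forall>v\<in>V. card {u\<in>S. E v u} \<ge> 2)"

definition gamma_2t :: "'a set \<Rightarrow> ('a \<Rightarrow> 'a \<Rightarrow> bool) \<Rightarrow> nat" where
  "gamma_2t V E = Min (card ` {S. total_2_dominating V E S})"

end

theory Submission
  imports Defs
begin

text \<open>View a set S of vertices of G \<box> H as a relation between V and W, and write c(u) and
  r(w) for the sizes of its column S``{u} and its row S\<inverse>``{w}. A vertex (u,w) has its
  neighbours in S on its column or its row, so total 2-domination gives c(u) + r(w) \<ge> 2, and
  even c(u) + r(w) \<ge> 4 when (u,w) itself lies in S. If some row is empty, every column has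
  at least two elements and |S| \<ge> 2|V|; symmetrically for an empty column. Otherwise give each
  (u,w) \<in> S the weight 1/c(u) + 1/r(w): the weights add up to |V| + |W|, and each is at most
  4/3 because c(u) + r(w) \<ge> 4. Hence |S| \<ge> 3/4 (|V| + |W|) \<ge> 3/2 min(|V|, |W|).\<close>

lemma sum_inverse_card_Image:
  assumes "finite A" "finite B" "S \<subseteq> A \<times> B" "\<And>u. u \<in> A \<Longrightarrow> S `` {u} \<noteq> {}"
  shows "(\<Sum>s\<in>S. 1 / real (card (S `` {fst s}))) = real (card A)"
proof -
  have fin: "finite (S `` {u})" for u
    using assms(1-3) by (meson finite_Image finite_SigmaI finite_subset)
  have "(\<Sum>u\<in>A. \<Sum>w\<in>S `` {u}. 1 / real (card (S `` {u})))
      = (\<Sum>(u, w)\<in>(SIGMA u:A. S `` {u}). 1 / real (card (S `` {u})))"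
    using assms(1) fin by (intro sum.Sigma) auto
  also have "(SIGMA u:A. S `` {u}) = S"
    using assms(3) by auto
  finally have "(\<Sum>s\<in>S. 1 / real (card (S `` {fst s}))) = (\<Sum>u\<in>A. \<Sum>w\<in>S `` {u}. 1 / real (card (S `` {u})))"
    by (simp add: split_def)
  also have "\<dots> = (\<Sum>u\<in>A. 1)"
    using assms(4) fin by (intro sum.cong) auto
  finally show ?thesis
    by simp
qed

lemma card_eq_sum_card_Image:
  assumes "finite A" "finite B" "S \<subseteq> A \<times> B"
  shows "card S = (\<Sum>u\<in>A. card (S `` {u}))"
proof -
  have "S = (SIGMA u:A. S `` {u})"
    using assms(3) by auto
  then show ?thesis
    using assms by (metis card_SigmaI finite_Image finite_SigmaI finite_subset)
qed

lemma inverse_add_inverse_le_four_thirds: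
  fixes c r :: nat
  assumes "c \<ge> 1" "r \<ge> 1" "c + r \<ge> 4"
  shows "1 / real c + 1 / real r \<le> 4 / 3"
proof -
  consider "c = 1" "r \<ge> 3" | "c = 2" "r \<ge> 2" | "c \<ge> 3"
    using assms by linarith
  then show ?thesis
  proof cases
    case 1
    then show ?thesis by (simp add: field_simps)
  next
    case 2
    then show ?thesis by (simp add: field_simps)
  next
    case 3
    then have "1 / real c \<le> 1 / 3" by (simp add: field_simps)
    moreover have "1 / real r \<le> 1" using assms by (simp add: field_simps)
    ultimately show ?thesis by simp
  qed
qed

lemma card_cart_neighbours_le:
  assumes "\<And>u. \<not> E u u" "\<And>w. \<not> F w w" "finite S"
  shows "card {y\<in>S. cart_edges E F (u, w) y} \<le> card (S `` {u} - {w}) + card (S\<inverse> `` {w} - {u})"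
proof -
  have "{y\<in>S. cart_edges E F (u, w) y} \<subseteq> Pair u ` (S `` {u} - {w}) \<union> (\<lambda>u'. (u', w)) ` (S\<inverse> `` {w} - {u})"
    using assms(1,2) by (auto simp: cart_edges_def)
  then have "card {y\<in>S. cart_edges E F (u, w) y}
      \<le> card (Pair u ` (S `` {u} - {w}) \<union> (\<lambda>u'. (u', w)) ` (S\<inverse> `` {w} - {u}))"
    using assms(3) by (intro card_mono) auto
  also have "\<dots> \<le> card (Pair u ` (S `` {u} - {w})) + card ((\<lambda>u'. (u', w)) ` (S\<inverse> `` {w} - {u}))"
    by (rule card_Un_le)
  also have "\<dots> \<le> card (S `` {u} - {w}) + card (S\<inverse> `` {w} - {u})"
    by (intro add_mono card_image_le) (use assms(3) in auto)
  finally show ?thesis .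
qed

lemma total_2_dominating_cart_card_Image_ge:
  assumes "simple_graph V E" "simple_graph W F"
    and "total_2_dominating (V \<times> W) (cart_edges E F) S" "u \<in> V" "w \<in> W"
  shows "2 + (if (u, w) \<in> S then 2 else 0) \<le> card (S `` {u}) + card (S\<inverse> `` {w})"
proof -
  have "finite S"
    using assms(1-3) by (meson finite_SigmaI finite_subset simple_graph_def total_2_dominating_def)
  have "2 \<le> card {y\<in>S. cart_edges E F (u, w) y}"
    using assms(3-5) by (auto simp: total_2_dominating_def)
  also have "\<dots> \<le> card (S `` {u} - {w}) + card (S\<inverse> `` {w} - {u})"
    using assms(1,2) \<open>finite S\<close> by (intro card_cart_neighbours_le) (auto simp: simple_graph_def)
  moreover have "card (S `` {u}) \<ge> 1" "card (S\<inverse> `` {w}) \<ge> 1" if "(u, w) \<in> S"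
    using that \<open>finite S\<close> by (auto simp: Suc_le_eq card_gt_0_iff)
  ultimately show ?thesis
    using \<open>finite S\<close> by (auto simp: card_Diff_singleton_if split: if_splits)
qed

lemma total_2_dominating_converse:
  assumes "total_2_dominating (V \<times> W) (cart_edges E F) S"
  shows "total_2_dominating (W \<times> V) (cart_edges F E) (S\<inverse>)"
proof -
  have "{y\<in>S\<inverse>. cart_edges F E (w, u) y} = prod.swap ` {y\<in>S. cart_edges E F (u, w) y}" for u w
    by (auto simp: cart_edges_def)
  then have "card {y\<in>S\<inverse>. cart_edges F E (w, u) y} = card {y\<in>S. cart_edges E F (u, w) y}" for u w
    by (simp add: card_image)
  then show ?thesis
    using assms by (auto simp: total_2_dominating_def)
qed

lemma total_2_dominating_cart_card_ge_if_empty_row: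
  assumes "simple_graph V E" "simple_graph W F"
    and "total_2_dominating (V \<times> W) (cart_edges E F) S" "w \<in> W" "S\<inverse> `` {w} = {}"
  shows "2 * card V \<le> card S"
proof -
  have "(\<Sum>u\<in>V. 2) \<le> (\<Sum>u\<in>V. card (S `` {u}))"
    using total_2_dominating_cart_card_Image_ge[OF assms(1-3) _ assms(4)] assms(5)
    by (intro sum_mono) fastforce
  also have "\<dots> = card S"
    using assms(1-3) by (intro card_eq_sum_card_Image[symmetric])
      (auto simp: simple_graph_def total_2_dominating_def)
  finally show ?thesis
    by simp
qed

lemma total_2_dominating_cart_card_ge_if_lines_nonempty:
  assumes "simple_graph V E" "simple_graph W F"
    and "total_2_dominating (V \<times> W) (cart_edges E F) S"
    and "\<And>u. u \<in> V \<Longrightarrow> S `` {u} \<noteq> {}" "\<And>w. w \<in> W \<Longrightarrow> S\<inverse> `` {w} \<noteq> {}"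
  shows "3 / 4 * (real (card V) + real (card W)) \<le> real (card S)"
proof -
  have fin: "finite V" "finite W" and sub: "S \<subseteq> V \<times> W" "S\<inverse> \<subseteq> W \<times> V"
    using assms(1-3) by (auto simp: simple_graph_def total_2_dominating_def)
  define weight where "weight s = 1 / real (card (S `` {fst s})) + 1 / real (card (S\<inverse> `` {snd s}))"
    for s
  have "(\<Sum>s\<in>S. 1 / real (card (S\<inverse> `` {snd s}))) = (\<Sum>s\<in>S\<inverse>. 1 / real (card (S\<inverse> `` {fst s})))"
    by (rule sum.reindex_bij_witness[of _ prod.swap prod.swap]) auto
  then have "(\<Sum>s\<in>S. weight s) = real (card V) + real (card W)"
    unfolding weight_def sum.distrib
    using sum_inverse_card_Image[OF fin sub(1) assms(4)]
      sum_inverse_card_Image[OF fin(2,1) sub(2) assms(5)] by simp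
  moreover have "weight s \<le> 4 / 3" if "s \<in> S" for s
  proof -
    obtain u w where s: "s = (u, w)" "u \<in> V" "w \<in> W"
      using \<open>s \<in> S\<close> sub(1) by auto
    have "4 \<le> card (S `` {u}) + card (S\<inverse> `` {w})"
      using total_2_dominating_cart_card_Image_ge[OF assms(1-3) s(2,3)] \<open>s \<in> S\<close> s(1) by simp
    moreover have "S `` {u} \<noteq> {}" "S\<inverse> `` {w} \<noteq> {}"
      using assms(4,5) s by auto
    then have "card (S `` {u}) \<ge> 1" "card (S\<inverse> `` {w}) \<ge> 1"
      using finite_subset[OF sub(1) finite_SigmaI[OF fin]] by (auto simp: Suc_le_eq card_gt_0_iff)
    ultimately show ?thesis
      unfolding weight_def s(1) by (intro inverse_add_inverse_le_four_thirds) auto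
  qed
  then have "(\<Sum>s\<in>S. weight s) \<le> (\<Sum>s\<in>S. 4 / 3)"
    by (rule sum_mono)
  ultimately show ?thesis
    by simp
qed

theorem total_2_dominating_cart_card_ge:
  assumes "simple_graph V E" "simple_graph W F"
    and "total_2_dominating (V \<times> W) (cart_edges E F) S"
  shows "3 / 2 * real (min (card V) (card W)) \<le> real (card S)"
proof (cases "\<exists>w\<in>W. S\<inverse> `` {w} = {}")
  case True
  then show ?thesis
    using total_2_dominating_cart_card_ge_if_empty_row[OF assms] by fastforce
next
  case no_empty_row: False
  show ?thesis
  proof (cases "\<exists>u\<in>V. S `` {u} = {}")
    case True
    then have "2 * card W \<le> card (S\<inverse>)"
      using total_2_dominating_cart_card_ge_if_empty_row[OF assms(2,1)
          total_2_dominating_converse[OF assms(3)]] by auto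
    then show ?thesis
      by simp
  next
    case False
    then show ?thesis
      using total_2_dominating_cart_card_ge_if_lines_nonempty[OF assms] no_empty_row
      by (auto simp: min_def)
  qed
qed

lemma gamma_2t_attained:
  assumes "finite V" "total_2_dominating V E S"
  obtains S' where "total_2_dominating V E S'" "gamma_2t V E = card S'"
proof -
  have "{S. total_2_dominating V E S} \<subseteq> Pow V"
    by (auto simp: total_2_dominating_def)
  then have "finite (card ` {S. total_2_dominating V E S})"
    using assms(1) by (meson finite_Pow_iff finite_imageI finite_subset)
  then have "gamma_2t V E \<in> card ` {S. total_2_dominating V E S}"
    unfolding gamma_2t_def using assms(2) by (intro Min_in) auto
  then show ?thesis
    using that by auto
qed

lemma total_2_dominating_cart_self:
  assumes "simple_graph V E" "no_isolated V E" "simple_graph W F" "no_isolated W F"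
  shows "total_2_dominating (V \<times> W) (cart_edges E F) (V \<times> W)"
  unfolding total_2_dominating_def
proof (intro conjI ballI)
  fix x assume "x \<in> V \<times> W"
  then obtain u w where x: "x = (u, w)" "u \<in> V" "w \<in> W"
    by auto
  obtain u' w' where "E u u'" "F w w'"
    using assms(2,4) x unfolding no_isolated_def by blast
  moreover have "u' \<noteq> u"
    using \<open>E u u'\<close> assms(1) by (auto simp: simple_graph_def)
  ultimately have "{(u', w), (u, w')} \<subseteq> {y \<in> V \<times> W. cart_edges E F x y}" "card {(u', w), (u, w')} = 2"
    using assms(1,3) x by (auto simp: cart_edges_def simple_graph_def)
  moreover have "finite (V \<times> W)"
    using assms(1,3) by (simp add: simple_graph_def)
  ultimately show "2 \<le> card {y \<in> V \<times> W. cart_edges E F x y}"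
    by (metis (no_types, lifting) card_mono finite_subset mem_Collect_eq subsetI)
qed simp

theorem corollary10:
  fixes V :: "'a set" and E :: "'a \<Rightarrow> 'a \<Rightarrow> bool"
    and W :: "'b set" and F :: "'b \<Rightarrow> 'b \<Rightarrow> bool"
  assumes "simple_graph V E" and "no_isolated V E"
    and "simple_graph W F" and "no_isolated W F"
    and "card V \<ge> 2" and "card W \<ge> 2"
  shows "real (gamma_2t (V \<times> W) (cart_edges E F)) \<ge> 3 / 2 * real (min (card V) (card W))"
proof -
  have "finite (V \<times> W)"
    using assms(1,3) by (simp add: simple_graph_def)
  then obtain S where "total_2_dominating (V \<times> W) (cart_edges E F) S"
      "gamma_2t (V \<times> W) (cart_edges E F) = card S"
    using gamma_2t_attained total_2_dominating_cart_self[OF assms(1-4)] by blast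
  then show ?thesis
    using total_2_dominating_cart_card_ge[OF assms(1,3)] by simp
qed

end
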